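(* Let $K$ be a field with $\operatorname{char} K\neq 2$, $R=K[x_1,\dots,x_6]$ and $I=(x_1x_3,\ x_1x_4,\ x_1x_6,\ x_2x_4,\ x_2x_5,\ x_2x_6,\ x_3x_5,\ x_3x_6,\ x_4x_5x_6)$. Then $$I=\sqrt{(x_1x_4+x_3x_5,\ x_1x_3+x_2x_6+x_4x_5x_6,\ x_1x_6+x_2x_5,\ x_2x_4+x_3x_6)}.$$ *)

theory Defs
  imports Main "HOL-Library.Poly_Mapping" "HOL-Library.Numeral_Type"
begin

text \<open>The variable x_(i+1) of the paper is X i, for i = 0,...,5.\<close>

type_synonym 'a mpoly6 = "(6 \<Rightarrow>\<^sub>0 nat) \<Rightarrow>\<^sub>0 'a"

definition X :: "6 \<Rightarrow> 'a::comm_ring_1 mpoly6" where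
  "X i = Poly_Mapping.single (Poly_Mapping.single i 1) 1"

definition is_ideal :: "'r::comm_ring_1 set \<Rightarrow> bool" where
  "is_ideal I \<longleftrightarrow> 0 \<in> I \<and> (\<forall>a\<in>I. \<forall>b\<in>I. a + b \<in> I) \<and> (\<forall>r. \<forall>a\<in>I. r * a \<in> I)"

definition ideal_gen :: "'r::comm_ring_1 set \<Rightarrow> 'r set" where
  "ideal_gen S = \<Inter>{I. is_ideal I \<and> S \<subseteq> I}"

definition radical :: "'r::comm_ring_1 set \<Rightarrow> 'r set" where
  "radical I = {f. \<exists>n::nat. f ^ n \<in> I}"

end

theory Submission
  imports Defs
begin

text \<open>
  Write \<open>I\<close> for the monomial ideal and \<open>J\<close> for the ideal generated by the four
  polynomials. Each generator of \<open>J\<close> is a sum of generators of \<open>I\<close>, so \<open>J \<subseteq> I\<close>; and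
  \<open>I\<close> is radical, being generated by squarefree monomials: a polynomial lies in such an
  ideal iff each of its monomials is divisible by a generator, and the leading monomial
  of \<open>f\<^sup>k\<close> has the same support as that of \<open>f\<close>. Conversely, for every generator \<open>m\<close> of
  \<open>I\<close> an explicit certificate writes \<open>2 m\<^sup>n\<close> (\<open>n \<le> 3\<close>) as a combination of the generators
  of \<open>J\<close>; dividing by 2 is where \<open>char K \<noteq> 2\<close> is needed.
\<close>

lemma is_ideal_ideal_gen: "is_ideal (ideal_gen S)"
  unfolding ideal_gen_def is_ideal_def by blast

lemma ideal_gen_base: "S \<subseteq> ideal_gen S"
  unfolding ideal_gen_def by blast

lemma ideal_gen_minimal: "is_ideal I \<Longrightarrow> S \<subseteq> I \<Longrightarrow> ideal_gen S \<subseteq> I"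
  unfolding ideal_gen_def by blast

lemma ideal_zero: "is_ideal I \<Longrightarrow> 0 \<in> I"
  unfolding is_ideal_def by blast

lemma ideal_add: "is_ideal I \<Longrightarrow> a \<in> I \<Longrightarrow> b \<in> I \<Longrightarrow> a + b \<in> I"
  unfolding is_ideal_def by blast

lemma ideal_mult_left: "is_ideal I \<Longrightarrow> a \<in> I \<Longrightarrow> r * a \<in> I"
  unfolding is_ideal_def by blast

lemma ideal_diff:
  assumes "is_ideal I" "a \<in> I" "b \<in> I"
  shows "a - b \<in> I"
proof -
  have "a + (- 1) * b \<in> I" by (intro ideal_add ideal_mult_left assms)
  then show ?thesis by simp
qed

lemma ideal_sum: "is_ideal I \<Longrightarrow> (\<And>x. x \<in> A \<Longrightarrow> f x \<in> I) \<Longrightarrow> sum f A \<in> I"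
  by (induction A rule: infinite_finite_induct) (auto intro: ideal_zero ideal_add)

lemma ideal_dvd_cancel:
  assumes "is_ideal I" "u dvd 1" "u * a \<in> I"
  shows "a \<in> I"
proof -
  obtain v where "1 = u * v" using assms(2) by (rule dvdE)
  then have "a = v * (u * a)" by (simp add: algebra_simps)
  then show ?thesis using ideal_mult_left[OF assms(1,3)] by metis
qed

lemma subset_radical: "I \<subseteq> radical I"
  unfolding radical_def by (auto intro: exI[of _ 1])

lemma radical_mono: "I \<subseteq> J \<Longrightarrow> radical I \<subseteq> radical J"
  unfolding radical_def by blast

lemma is_ideal_radical:
  assumes I: "is_ideal I"
  shows "is_ideal (radical I)"
  unfolding is_ideal_def
proof (intro conjI ballI allI)
  show "0 \<in> radical I"
    using ideal_zero[OF I] unfolding radical_def by (auto intro: exI[of _ 1])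
next
  fix r a assume "a \<in> radical I"
  then obtain n where "a ^ n \<in> I" unfolding radical_def by blast
  then have "(r * a) ^ n \<in> I" unfolding power_mult_distrib by (rule ideal_mult_left[OF I])
  then show "r * a \<in> radical I" unfolding radical_def by blast
next
  fix a b assume "a \<in> radical I" "b \<in> radical I"
  then obtain m n where am: "a ^ m \<in> I" and bn: "b ^ n \<in> I" unfolding radical_def by blast
  have "(\<Sum>k\<le>m + n. of_nat (m + n choose k) * a ^ k * b ^ (m + n - k)) \<in> I"
  proof (rule ideal_sum[OF I])
    fix k
    show "of_nat (m + n choose k) * a ^ k * b ^ (m + n - k) \<in> I"
    proof (cases "m \<le> k")
      case True
      then have "a ^ k = a ^ (k - m) * a ^ m" by (simp flip: power_add)
      then have "of_nat (m + n choose k) * a ^ k * b ^ (m + n - k)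
          = (of_nat (m + n choose k) * a ^ (k - m) * b ^ (m + n - k)) * a ^ m"
        by (simp only: ac_simps)
      then show ?thesis using ideal_mult_left[OF I am] by metis
    next
      case False
      then have "b ^ (m + n - k) = b ^ (m - k) * b ^ n" by (simp flip: power_add)
      then have "of_nat (m + n choose k) * a ^ k * b ^ (m + n - k)
          = (of_nat (m + n choose k) * a ^ k * b ^ (m - k)) * b ^ n"
        by (simp only: ac_simps)
      then show ?thesis using ideal_mult_left[OF I bn] by metis
    qed
  qed
  then have "(a + b) ^ (m + n) \<in> I" by (simp add: binomial_ring)
  then show "a + b \<in> radical I" unfolding radical_def by blast
qed

section \<open>Certificates for the radical\<close>

lemma radical_by_certificate:
  fixes x :: "'r::comm_ring_1"
  assumes J: "is_ideal J" and "(2::'r) dvd 1" and "ga \<in> J" "gb \<in> J" "gc \<in> J" "gd \<in> J"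
    and "2 * x ^ n = pa * ga + pb * gb + pc * gc + pd * gd"
  shows "x \<in> radical J"
proof -
  have "pa * ga + pb * gb + pc * gc + pd * gd \<in> J"
    using assms(3-6) by (intro ideal_add ideal_mult_left J)
  then have "2 * x ^ n \<in> J" by (simp only: assms(7))
  then have "x ^ n \<in> J" by (rule ideal_dvd_cancel[OF J assms(2)])
  then show ?thesis unfolding radical_def by blast
qed

lemma products_in_radical:
  fixes a b c d e f :: "'r::comm_ring_1"
  assumes "is_ideal J" "(2::'r) dvd 1"
    and "a * d + c * e \<in> J" "a * c + b * f + d * e * f \<in> J" "a * f + b * e \<in> J" "b * d + c * f \<in> J"
  shows "a * c \<in> radical J" "a * d \<in> radical J" "a * f \<in> radical J" "b * d \<in> radical J"
    "b * e \<in> radical J" "b * f \<in> radical J" "c * e \<in> radical J" "c * f \<in> radical J"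
    "d * e * f \<in> radical J"
proof -
  note cert = radical_by_certificate[OF assms]
  show "a * c \<in> radical J"
    by (rule cert[where n = 2 and pa = "b ^ 2 - c * e * f" and pb = "2 * a * c"
          and pc = "- b * c - c * d * e" and pd = "c * e ^ 2 - a * b"])
      (simp add: algebra_simps eval_nat_numeral)
  show "a * d \<in> radical J"
    by (rule cert[where n = 3
          and pa = "2 * a ^ 2 * d ^ 2 - 2 * a * c * d * e + c * e * f ^ 2 - d ^ 2 * e ^ 2 * f"
          and pb = "2 * c * d * e ^ 2" and pc = "d ^ 3 * e ^ 2 - c * d * e * f"
          and pd = "- (d ^ 2 * e ^ 3) - c * e ^ 2 * f"])
      (simp add: algebra_simps eval_nat_numeral)
  show "a * f \<in> radical J"
    by (rule cert[where n = 3 and pa = "a * e ^ 2 * f ^ 2 - a ^ 2 * b * e"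
          and pb = "a * b * e ^ 2 - a ^ 2 * e * f"
          and pc = "2 * a ^ 2 * f ^ 2 - a * b * e * f - b * d * e ^ 3 - c * e ^ 3 * f"
          and pd = "b * e ^ 4 + a ^ 3 * e"])
      (simp add: algebra_simps eval_nat_numeral)
  show "b * d \<in> radical J"
    by (rule cert[where n = 3 and pa = "2 * b * c ^ 2 * d + c ^ 3 * f - c * d ^ 2 * f ^ 2"
          and pb = "- 2 * b * c * d ^ 2" and pc = "c * d ^ 3 * f - c ^ 3 * d"
          and pd = "2 * b ^ 2 * d ^ 2 + c * d ^ 2 * e * f - c ^ 3 * e"])
      (simp add: algebra_simps eval_nat_numeral)
  show "b * e \<in> radical J"
    by (rule cert[where n = 3 and pa = "a ^ 2 * b * e - a * e ^ 2 * f ^ 2"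
          and pb = "a ^ 2 * e * f - a * b * e ^ 2"
          and pc = "2 * b ^ 2 * e ^ 2 - a * b * e * f + b * d * e ^ 3 + c * e ^ 3 * f"
          and pd = "- b * e ^ 4 - a ^ 3 * e"])
      (simp add: algebra_simps eval_nat_numeral)
  show "b * f \<in> radical J"
    by (rule cert[where n = 2 and pa = "f ^ 3 + b ^ 2" and pb = "2 * b * f"
          and pc = "- d * f ^ 2 - b * c" and pd = "- e * f ^ 2 - a * b"])
      (simp add: algebra_simps eval_nat_numeral)
  show "c * e \<in> radical J"
    by (rule cert[where n = 3 and pa = "2 * c ^ 2 * e ^ 2 - c * e * f ^ 2 + d ^ 2 * e ^ 2 * f"
          and pb = "- 2 * c * d * e ^ 2" and pc = "c * d * e * f - d ^ 3 * e ^ 2"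
          and pd = "d ^ 2 * e ^ 3 + c * e ^ 2 * f"])
      (simp add: algebra_simps eval_nat_numeral)
  show "c * f \<in> radical J"
    by (rule cert[where n = 3 and pa = "c * d ^ 2 * f ^ 2 + c ^ 3 * f"
          and pb = "- 2 * c ^ 2 * d * f" and pc = "c ^ 3 * d - c * d ^ 3 * f"
          and pd = "2 * c ^ 2 * f ^ 2 + c * d ^ 2 * e * f - c ^ 3 * e"])
      (simp add: algebra_simps eval_nat_numeral)
  show "d * e * f \<in> radical J"
    by (rule cert[where n = 2 and pa = "f ^ 3 - c * e * f" and pb = "2 * d * e * f"
          and pc = "- d * f ^ 2 - c * d * e" and pd = "c * e ^ 2 - e * f ^ 2"])
      (simp add: algebra_simps eval_nat_numeral)
qed

section \<open>Leading monomials\<close>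

lemma lookup_mult_Max_keys:
  fixes p q :: "'m::{ordered_cancel_comm_monoid_add, linorder} \<Rightarrow>\<^sub>0 'a::semiring_0"
  shows "Poly_Mapping.lookup (p * q) (Max (Poly_Mapping.keys p) + Max (Poly_Mapping.keys q))
       = Poly_Mapping.lookup p (Max (Poly_Mapping.keys p)) * Poly_Mapping.lookup q (Max (Poly_Mapping.keys q))"
proof -
  define lp lq where "lp = Max (Poly_Mapping.keys p)" and "lq = Max (Poly_Mapping.keys q)"
  have only_top: "l = lp \<and> r = lq"
    if "l \<in> Poly_Mapping.keys p" "r \<in> Poly_Mapping.keys q" "lp + lq = l + r" for l r
  proof -
    have "l \<le> lp" "r \<le> lq" using that(1,2) by (simp_all add: lp_def lq_def)
    then show ?thesis
      using that(3) add_strict_mono[of l lp r lq] add_less_le_mono[of l lp r lq] add_le_less_mono[of l lp r lq]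
      by (auto simp: order_le_less)
  qed
  have "Poly_Mapping.lookup (p * q) (lp + lq)
      = (\<Sum>l. Poly_Mapping.lookup p l * (\<Sum>r. Poly_Mapping.lookup q r when lp + lq = l + r))"
    by (rule lookup_mult)
  also have "\<dots> = (\<Sum>l. Poly_Mapping.lookup p l * (Poly_Mapping.lookup q lq when l = lp))"
  proof (rule Sum_any.cong)
    fix l
    show "Poly_Mapping.lookup p l * (\<Sum>r. Poly_Mapping.lookup q r when lp + lq = l + r)
        = Poly_Mapping.lookup p l * (Poly_Mapping.lookup q lq when l = lp)"
    proof (cases "l \<in> Poly_Mapping.keys p")
      case True
      have "(\<Sum>r. Poly_Mapping.lookup q r when lp + lq = l + r)
          = (\<Sum>r. Poly_Mapping.lookup q r when l = lp \<and> r = lq)"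
        by (rule Sum_any.cong) (use only_top[OF True] in \<open>auto simp: when_def in_keys_iff\<close>)
      then show ?thesis by (simp add: when_def)
    qed (simp add: in_keys_iff)
  qed
  also have "\<dots> = Poly_Mapping.lookup p lp * Poly_Mapping.lookup q lq"
    by (simp add: mult_when)
  finally show ?thesis by (simp add: lp_def lq_def)
qed

lemma Max_keys_mult:
  fixes p q :: "'m::{ordered_cancel_comm_monoid_add, linorder} \<Rightarrow>\<^sub>0 'a::semiring_no_zero_divisors"
  assumes "p \<noteq> 0" "q \<noteq> 0"
  shows "Max (Poly_Mapping.keys (p * q)) = Max (Poly_Mapping.keys p) + Max (Poly_Mapping.keys q)"
proof (rule Max_eqI)
  have "Max (Poly_Mapping.keys p) \<in> Poly_Mapping.keys p" "Max (Poly_Mapping.keys q) \<in> Poly_Mapping.keys q"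
    using assms by simp_all
  then show "Max (Poly_Mapping.keys p) + Max (Poly_Mapping.keys q) \<in> Poly_Mapping.keys (p * q)"
    by (simp add: in_keys_iff lookup_mult_Max_keys)
next
  fix x assume "x \<in> Poly_Mapping.keys (p * q)"
  then obtain l r where "x = l + r" "l \<in> Poly_Mapping.keys p" "r \<in> Poly_Mapping.keys q"
    using keys_mult by blast
  then show "x \<le> Max (Poly_Mapping.keys p) + Max (Poly_Mapping.keys q)"
    by (simp add: add_mono)
qed simp

lemma keys_add_nat: "Poly_Mapping.keys (m + n :: 'v \<Rightarrow>\<^sub>0 nat) = Poly_Mapping.keys m \<union> Poly_Mapping.keys n"
  by (auto simp: in_keys_iff lookup_add)

lemma keys_Max_keys_power:
  fixes p :: "('v::linorder \<Rightarrow>\<^sub>0 nat) \<Rightarrow>\<^sub>0 'a::ring_1_no_zero_divisors"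
  assumes "p \<noteq> 0"
  shows "Poly_Mapping.keys (Max (Poly_Mapping.keys (p ^ k))) \<subseteq> Poly_Mapping.keys (Max (Poly_Mapping.keys p))"
proof (induction k)
  case (Suc k)
  have "Max (Poly_Mapping.keys (p ^ Suc k)) = Max (Poly_Mapping.keys p) + Max (Poly_Mapping.keys (p ^ k))"
    using Max_keys_mult[OF assms, of "p ^ k"] assms by simp
  then show ?case using Suc by (simp add: keys_add_nat)
qed simp

section \<open>Squarefree monomial ideals\<close>

definition squarefree_monomial :: "'v set \<Rightarrow> ('v \<Rightarrow>\<^sub>0 nat) \<Rightarrow>\<^sub>0 'a::comm_semiring_1" where
  "squarefree_monomial S = Poly_Mapping.single (\<Sum>i\<in>S. Poly_Mapping.single i 1) 1"

lemma lookup_sum_single_one: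
  "finite S \<Longrightarrow> Poly_Mapping.lookup (\<Sum>i\<in>S. Poly_Mapping.single i (1::nat)) j = (if j \<in> S then 1 else 0)"
  by (simp add: lookup_sum lookup_single when_def)

lemma keys_sum_single_one: "finite S \<Longrightarrow> Poly_Mapping.keys (\<Sum>i\<in>S. Poly_Mapping.single i (1::nat)) = S"
  by (auto simp only: in_keys_iff lookup_sum_single_one split: if_splits)

lemma squarefree_monomial_mult:
  "finite S \<Longrightarrow> finite T \<Longrightarrow> S \<inter> T = {} \<Longrightarrow>
    squarefree_monomial S * squarefree_monomial T = squarefree_monomial (S \<union> T)"
  by (simp add: squarefree_monomial_def mult_single sum.union_disjoint)

lemma single_in_squarefree_ideal:
  assumes "S \<in> F" "S \<subseteq> Poly_Mapping.keys m"
  shows "Poly_Mapping.single m c \<in> ideal_gen (squarefree_monomial ` F :: (('v \<Rightarrow>\<^sub>0 nat) \<Rightarrow>\<^sub>0 'a::comm_ring_1) set)"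
proof -
  let ?e = "\<Sum>i\<in>S. Poly_Mapping.single i (1::nat)"
  have "finite S" using assms(2) finite_keys finite_subset by blast
  have split_m: "m = (m - ?e) + ?e"
  proof (rule poly_mapping_eqI)
    fix j
    have "j \<in> S \<Longrightarrow> Poly_Mapping.lookup m j \<ge> 1" using assms(2) by (auto simp: in_keys_iff)
    then show "Poly_Mapping.lookup m j = Poly_Mapping.lookup (m - ?e + ?e) j"
      by (simp only: lookup_add lookup_minus lookup_sum_single_one[OF \<open>finite S\<close>]) auto
  qed
  have "Poly_Mapping.single m c = Poly_Mapping.single (m - ?e) c * squarefree_monomial S"
    unfolding squarefree_monomial_def mult_single mult_1_right by (simp only: split_m[symmetric])
  moreover have "squarefree_monomial S \<in> ideal_gen (squarefree_monomial ` F :: (_ \<Rightarrow>\<^sub>0 'a) set)"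
    using assms(1) ideal_gen_base by blast
  ultimately show ?thesis by (simp add: ideal_mult_left is_ideal_ideal_gen)
qed

lemma is_ideal_monomials_covered:
  "is_ideal {p :: ('v \<Rightarrow>\<^sub>0 nat) \<Rightarrow>\<^sub>0 'a::comm_ring_1. \<forall>m\<in>Poly_Mapping.keys p. \<exists>S\<in>F. S \<subseteq> Poly_Mapping.keys m}"
    (is "is_ideal ?Q")
  unfolding is_ideal_def
proof (intro conjI ballI allI)
  fix p q assume "p \<in> ?Q" "q \<in> ?Q"
  then show "p + q \<in> ?Q" using keys_add[of p q] by blast
next
  fix r p assume p: "p \<in> ?Q"
  show "r * p \<in> ?Q"
  proof (intro CollectI ballI)
    fix m assume "m \<in> Poly_Mapping.keys (r * p)"
    then obtain x y where m: "m = x + y" and y: "y \<in> Poly_Mapping.keys p" using keys_mult by blast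
    obtain S where "S \<in> F" "S \<subseteq> Poly_Mapping.keys y" using p y by blast
    moreover have "Poly_Mapping.keys y \<subseteq> Poly_Mapping.keys m" unfolding m keys_add_nat by blast
    ultimately show "\<exists>S\<in>F. S \<subseteq> Poly_Mapping.keys m" by blast
  qed
qed simp

lemma keys_in_squarefree_ideal:
  assumes "\<forall>S\<in>F. finite S" "p \<in> ideal_gen (squarefree_monomial ` F :: (('v \<Rightarrow>\<^sub>0 nat) \<Rightarrow>\<^sub>0 'a::comm_ring_1) set)"
    "m \<in> Poly_Mapping.keys p"
  shows "\<exists>S\<in>F. S \<subseteq> Poly_Mapping.keys m"
proof -
  let ?Q = "{p :: ('v \<Rightarrow>\<^sub>0 nat) \<Rightarrow>\<^sub>0 'a. \<forall>m\<in>Poly_Mapping.keys p. \<exists>S\<in>F. S \<subseteq> Poly_Mapping.keys m}"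
  have "Poly_Mapping.keys (squarefree_monomial S :: ('v \<Rightarrow>\<^sub>0 nat) \<Rightarrow>\<^sub>0 'a) = {\<Sum>i\<in>S. Poly_Mapping.single i 1}"
    for S by (simp add: squarefree_monomial_def)
  then have "squarefree_monomial ` F \<subseteq> ?Q"
    using assms(1) keys_sum_single_one by fastforce
  then have "ideal_gen (squarefree_monomial ` F) \<subseteq> ?Q"
    by (rule ideal_gen_minimal[OF is_ideal_monomials_covered])
  then show ?thesis using assms(2,3) by auto
qed

lemma mem_squarefree_ideal_iff:
  assumes "\<forall>S\<in>F. finite S"
  shows "p \<in> ideal_gen (squarefree_monomial ` F :: (('v \<Rightarrow>\<^sub>0 nat) \<Rightarrow>\<^sub>0 'a::comm_ring_1) set)
     \<longleftrightarrow> (\<forall>m\<in>Poly_Mapping.keys p. \<exists>S\<in>F. S \<subseteq> Poly_Mapping.keys m)"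
proof
  assume "\<forall>m\<in>Poly_Mapping.keys p. \<exists>S\<in>F. S \<subseteq> Poly_Mapping.keys m"
  then have "(\<Sum>m\<in>Poly_Mapping.keys p. Poly_Mapping.single m (Poly_Mapping.lookup p m))
      \<in> ideal_gen (squarefree_monomial ` F)"
    by (intro ideal_sum is_ideal_ideal_gen) (blast intro: single_in_squarefree_ideal)
  moreover have "(\<Sum>m\<in>Poly_Mapping.keys p. Poly_Mapping.single m (Poly_Mapping.lookup p m)) = p"
    by (rule poly_mapping_eqI) (simp add: lookup_sum lookup_single when_def in_keys_iff)
  ultimately show "p \<in> ideal_gen (squarefree_monomial ` F)" by simp
qed (use keys_in_squarefree_ideal[OF assms] in blast)

lemma poly_mapping_split_keys:
  fixes p :: "'k \<Rightarrow>\<^sub>0 'a::ab_group_add"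
  obtains q r where "p = q + r" "\<forall>m\<in>Poly_Mapping.keys q. P m" "\<forall>m\<in>Poly_Mapping.keys r. \<not> P m"
proof
  define q where "q = (\<Sum>m\<in>{m \<in> Poly_Mapping.keys p. P m}. Poly_Mapping.single m (Poly_Mapping.lookup p m))"
  have lookup_q: "Poly_Mapping.lookup q m = (if P m then Poly_Mapping.lookup p m else 0)" for m
    by (simp add: q_def lookup_sum lookup_single when_def in_keys_iff)
  show "p = q + (p - q)" by simp
  show "\<forall>m\<in>Poly_Mapping.keys q. P m" "\<forall>m\<in>Poly_Mapping.keys (p - q). \<not> P m"
    by (auto simp: in_keys_iff lookup_minus lookup_q split: if_splits)
qed

theorem radical_squarefree_ideal:
  fixes F :: "'v::linorder set set"
  assumes fin: "\<forall>S\<in>F. finite S"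
  defines "I \<equiv> ideal_gen (squarefree_monomial ` F) :: (('v \<Rightarrow>\<^sub>0 nat) \<Rightarrow>\<^sub>0 'a::idom) set"
  shows "radical I = I"
proof
  show "radical I \<subseteq> I"
  proof
    fix p assume p: "p \<in> radical I"
    obtain q r where pqr: "p = q + r" and q: "\<forall>m\<in>Poly_Mapping.keys q. \<exists>S\<in>F. S \<subseteq> Poly_Mapping.keys m"
      and r: "\<forall>m\<in>Poly_Mapping.keys r. \<not> (\<exists>S\<in>F. S \<subseteq> Poly_Mapping.keys m)"
      by (rule poly_mapping_split_keys)
    have "q \<in> I" using q mem_squarefree_ideal_iff[OF fin] unfolding I_def by blast
    have "r = p - q" using pqr by simp
    then have "r \<in> radical I"
      using ideal_diff[OF is_ideal_radical p] \<open>q \<in> I\<close> subset_radical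
      unfolding I_def by (blast intro: is_ideal_ideal_gen)
    then obtain k where "r ^ k \<in> I" unfolding radical_def by blast
    have "r = 0"
    proof (rule ccontr)
      assume "r \<noteq> 0"
      then have "Max (Poly_Mapping.keys (r ^ k)) \<in> Poly_Mapping.keys (r ^ k)" by simp
      then obtain S where "S \<in> F" "S \<subseteq> Poly_Mapping.keys (Max (Poly_Mapping.keys (r ^ k)))"
        using keys_in_squarefree_ideal[OF fin] \<open>r ^ k \<in> I\<close> unfolding I_def by blast
      moreover have "Max (Poly_Mapping.keys r) \<in> Poly_Mapping.keys r" using \<open>r \<noteq> 0\<close> by simp
      ultimately show False using r keys_Max_keys_power[OF \<open>r \<noteq> 0\<close>, of k] by blast
    qed
    then show "p \<in> I" using pqr \<open>q \<in> I\<close> by simp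
  qed
qed (rule subset_radical)

lemma X_eq_squarefree_monomial: "X i = squarefree_monomial {i}"
  by (simp add: X_def squarefree_monomial_def)

lemma two_dvd_one_mpoly6:
  assumes "(2::'a::field) \<noteq> 0"
  shows "(2::'a mpoly6) dvd 1"
proof
  show "1 = 2 * Poly_Mapping.single 0 (inverse (2::'a))"
    by (metis single_numeral mult_single add_0 single_one right_inverse assms)
qed

theorem mainTheorem8:
  assumes "(2::'a::field) \<noteq> 0"
  shows "ideal_gen {X 0 * X 2, X 0 * X 3, X 0 * X 5, X 1 * X 3, X 1 * X 4, X 1 * X 5,
                    X 2 * X 4, X 2 * X 5, X 3 * X 4 * X 5}
       = radical (ideal_gen {X 0 * X 3 + X 2 * X 4,
                             X 0 * X 2 + X 1 * X 5 + X 3 * X 4 * X 5,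
                             X 0 * X 5 + X 1 * X 4,
                             X 1 * X 3 + X 2 * X 5} :: 'a mpoly6 set)"
    (is "ideal_gen ?G = radical (ideal_gen ?H)")
proof
  have G_eq: "?G = squarefree_monomial ` {{0, 2}, {0, 3}, {0, 5}, {1, 3}, {1, 4}, {1, 5}, {2, 4}, {2, 5}, {3, 4, 5}}"
    by (simp add: X_eq_squarefree_monomial squarefree_monomial_mult insert_commute)
  have G_radical: "radical (ideal_gen ?G) = ideal_gen ?G"
    unfolding G_eq by (rule radical_squarefree_ideal) simp
  have "?H \<subseteq> ideal_gen ?G"
    using ideal_gen_base[of ?G] by (auto intro!: ideal_add is_ideal_ideal_gen)
  then have "ideal_gen ?H \<subseteq> ideal_gen ?G" by (rule ideal_gen_minimal[OF is_ideal_ideal_gen])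
  then show "radical (ideal_gen ?H) \<subseteq> ideal_gen ?G"
    using radical_mono G_radical by blast
next
  have "?H \<subseteq> ideal_gen ?H" by (rule ideal_gen_base)
  then have "?G \<subseteq> radical (ideal_gen ?H)"
    using products_in_radical[where a = "X 0" and b = "X 1" and c = "X 2" and d = "X 3" and e = "X 4"
        and f = "X 5" and J = "ideal_gen ?H", OF is_ideal_ideal_gen two_dvd_one_mpoly6[OF assms]]
    by simp
  then show "ideal_gen ?G \<subseteq> radical (ideal_gen ?H)"
    by (rule ideal_gen_minimal[OF is_ideal_radical[OF is_ideal_ideal_gen]])
qed

end
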